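(* Let $(\mathfrak g,\{e_1,\dots,e_n\})$ be a nice nilpotent Lie algebra with root matrix $M_\Delta\in\mathbb R^{m\times n}$, and let $b$ be a solution of $M_\Delta M_\Delta^Tb=[1]$. If $\delta\in(\mathbb Z_2)^n$ satisfies $M_{\Delta,2}\delta=0$, then $\mathfrak g$ has a diagonal nilsoliton metric of signature $\delta$ if and only if there exist $\lambda\in\mathbb R$ and a vector $X\in\mathbb R^m$ with all entries positive such that $X\in-2\lambda b+\ker M_\Delta^T$.
   Context: A nice Lie algebra is a Lie algebra with a basis $\{e_1,\dots,e_n\}$ (dual basis $\{e^i\}$) such that each $[e_i,e_j]$ is a multiple of some $e_k$ and each $e_i\lrcorner\, de^j$ is a multiple of some $e^k$ ($d$ the Chevalley–Eilenberg differential). The root matrix $M_\Delta$ has one row for each triple $(\{i,j\},k)$ such that $[e_i,e_j]$ is a nonzero multiple of $e_k$, with $+1$ in position $k$, $-1$ in positions $i,j$, $0$ elsewhere; $M_{\Delta,2}$ is its mod 2 reduction; $[1]$ is the all-ones vector. A diagonal metric is $\sum g_ie^i\otimes e^i$ with $g_i\neq 0$; its signature is $\delta$ with $\delta_i=0$ if $g_i>0$, $\delta_i=1$ if $g_i<0$. A nilsoliton metric is one whose Ricci operator satisfies $\operatorname{Ric}=\lambda\,\mathrm{id}+D$ with $\lambda\in\mathbb R$ and $D$ a derivation. *)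

theory Defs
  imports Main "HOL-Library.FuncSet" Complex_Main
begin

text \<open>A real Lie algebra of dimension n with a fixed basis e_0,...,e_(n-1) is encoded by
  its structure constants: [e_i,e_j] = sum_k c i j k e_k (indices < n).
  Vectors are functions nat => real, only the components < n matter.\<close>

type_synonym sconst = "nat \<Rightarrow> nat \<Rightarrow> nat \<Rightarrow> real"
type_synonym vec = "nat \<Rightarrow> real"

definition ev :: "nat \<Rightarrow> vec" where
  "ev i = (\<lambda>l. if l = i then 1 else 0)"

definition br :: "nat \<Rightarrow> sconst \<Rightarrow> vec \<Rightarrow> vec \<Rightarrow> vec" where
  "br n c v w = (\<lambda>k. \<Sum>i<n. \<Sum>j<n. v i * w j * c i j k)"

definition is_lie_algebra :: "nat \<Rightarrow> sconst \<Rightarrow> bool" where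
  "is_lie_algebra n c \<longleftrightarrow>
     (\<forall>i<n. \<forall>j<n. \<forall>k<n. c i j k = - c j i k) \<and>
     (\<forall>i<n. \<forall>j<n. \<forall>k<n. \<forall>m<n.
        (\<Sum>l<n. c i j l * c l k m + c j k l * c l i m + c k i l * c l j m) = 0)"

text \<open>Nice basis: each [e_i,e_j] is a multiple of some e_k, and each e_i \<lrcorner> de^j
  is a multiple of some e^k. Since (e_i \<lrcorner> de^j)(e_k) = - c i k j, the latter means
  that for fixed i, j at most one k has c i k j \<noteq> 0.\<close>
definition nice :: "nat \<Rightarrow> sconst \<Rightarrow> bool" where
  "nice n c \<longleftrightarrow>
     (\<forall>i<n. \<forall>j<n. \<forall>k<n. \<forall>k'<n. c i j k \<noteq> 0 \<longrightarrow> c i j k' \<noteq> 0 \<longrightarrow> k = k') \<and>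
     (\<forall>i<n. \<forall>j<n. \<forall>k<n. \<forall>k'<n. c i k j \<noteq> 0 \<longrightarrow> c i k' j \<noteq> 0 \<longrightarrow> k = k')"

text \<open>Nilpotent: the lower central series vanishes, i.e. for some N all iterated brackets
  [e_(i1),[e_(i2),...,[e_(iN), e_y]...]] of basis vectors vanish.\<close>
definition nilpotent_la :: "nat \<Rightarrow> sconst \<Rightarrow> bool" where
  "nilpotent_la n c \<longleftrightarrow>
     (\<exists>N. \<forall>is. length is = N \<longrightarrow> set is \<subseteq> {..<n} \<longrightarrow> (\<forall>y<n. \<forall>k<n.
         foldr (\<lambda>i v. br n c (ev i) v) is (ev y) k = 0))"

definition nice_nilpotent :: "nat \<Rightarrow> sconst \<Rightarrow> bool" where
  "nice_nilpotent n c \<longleftrightarrow> is_lie_algebra n c \<and> nice n c \<and> nilpotent_la n c"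

definition ip :: "nat \<Rightarrow> vec \<Rightarrow> vec \<Rightarrow> vec \<Rightarrow> real" where
  "ip n g u v = (\<Sum>i<n. g i * u i * v i)"

definition diag_metric :: "nat \<Rightarrow> vec \<Rightarrow> bool" where
  "diag_metric n g \<longleftrightarrow> (\<forall>i<n. g i \<noteq> 0)"

text \<open>Levi-Civita connection of the left-invariant metric (Koszul formula):
  2 <nabla_x y, z> = <[x,y],z> - <[y,z],x> + <[z,x],y>.\<close>
definition lc :: "nat \<Rightarrow> sconst \<Rightarrow> vec \<Rightarrow> vec \<Rightarrow> vec \<Rightarrow> vec" where
  "lc n c g x y = (\<lambda>l. (ip n g (br n c x y) (ev l) - ip n g (br n c y (ev l)) x
                        + ip n g (br n c (ev l) x) y) / (2 * g l))"

definition curv :: "nat \<Rightarrow> sconst \<Rightarrow> vec \<Rightarrow> vec \<Rightarrow> vec \<Rightarrow> vec \<Rightarrow> vec" where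
  "curv n c g x y z = (\<lambda>l. lc n c g x (lc n c g y z) l - lc n c g y (lc n c g x z) l
                           - lc n c g (br n c x y) z l)"

definition ric :: "nat \<Rightarrow> sconst \<Rightarrow> vec \<Rightarrow> vec \<Rightarrow> vec \<Rightarrow> real" where
  "ric n c g y z = (\<Sum>l<n. curv n c g (ev l) y z l)"

text \<open>Matrix of the Ricci operator Ric (defined by <Ric y, z> = ric(y,z)):
  entry (l,m) is the e_l-component of Ric e_m.\<close>
definition ricop :: "nat \<Rightarrow> sconst \<Rightarrow> vec \<Rightarrow> nat \<Rightarrow> nat \<Rightarrow> real" where
  "ricop n c g l m = ric n c g (ev m) (ev l) / g l"

definition mat_app :: "nat \<Rightarrow> (nat \<Rightarrow> nat \<Rightarrow> real) \<Rightarrow> vec \<Rightarrow> vec" where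
  "mat_app n D v = (\<lambda>l. \<Sum>m<n. D l m * v m)"

definition derivation :: "nat \<Rightarrow> sconst \<Rightarrow> (nat \<Rightarrow> nat \<Rightarrow> real) \<Rightarrow> bool" where
  "derivation n c D \<longleftrightarrow> (\<forall>i<n. \<forall>j<n. \<forall>k<n.
      mat_app n D (br n c (ev i) (ev j)) k
        = br n c (mat_app n D (ev i)) (ev j) k + br n c (ev i) (mat_app n D (ev j)) k)"

definition nilsoliton :: "nat \<Rightarrow> sconst \<Rightarrow> vec \<Rightarrow> bool" where
  "nilsoliton n c g \<longleftrightarrow> (\<exists>(lam::real) D. derivation n c D \<and>
      (\<forall>l<n. \<forall>m<n. ricop n c g l m = (if l = m then lam else 0) + D l m))"

text \<open>Signature \<delta> \<in> (Z_2)^n encoded as integers in {0,1}.\<close>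
definition has_signature :: "nat \<Rightarrow> vec \<Rightarrow> (nat \<Rightarrow> int) \<Rightarrow> bool" where
  "has_signature n g \<delta> \<longleftrightarrow> (\<forall>i<n. (g i > 0 \<longrightarrow> \<delta> i = 0) \<and> (g i < 0 \<longrightarrow> \<delta> i = 1))"

text \<open>The index set \<Delta> of rows of the root matrix: triples (i,j,k), i<j standing for
  ({i,j},k), with [e_i,e_j] a nonzero multiple of e_k. Vectors in R^m are functions on \<Delta>.\<close>
definition Delta :: "nat \<Rightarrow> sconst \<Rightarrow> (nat \<times> nat \<times> nat) set" where
  "Delta n c = {(i,j,k). i < j \<and> j < n \<and> k < n \<and> c i j k \<noteq> 0}"

definition root_entry :: "nat \<times> nat \<times> nat \<Rightarrow> nat \<Rightarrow> int" where
  "root_entry r l = (case r of (i,j,k) \<Rightarrow>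
      (if l = k then 1 else 0) - (if l = i then 1 else 0) - (if l = j then 1 else 0))"

definition rootT_app :: "nat \<Rightarrow> sconst \<Rightarrow> (nat \<times> nat \<times> nat \<Rightarrow> real) \<Rightarrow> nat \<Rightarrow> real" where
  "rootT_app n c y l = (\<Sum>r\<in>Delta n c. of_int (root_entry r l) * y r)"

definition root_app :: "nat \<Rightarrow> (nat \<Rightarrow> real) \<Rightarrow> nat \<times> nat \<times> nat \<Rightarrow> real" where
  "root_app n x r = (\<Sum>l<n. of_int (root_entry r l) * x l)"

definition root2_kills :: "nat \<Rightarrow> sconst \<Rightarrow> (nat \<Rightarrow> int) \<Rightarrow> bool" where
  "root2_kills n c \<delta> \<longleftrightarrow> (\<forall>r\<in>Delta n c. (\<Sum>l<n. root_entry r l * \<delta> l) mod 2 = 0)"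

end

theory Submission
  imports Defs "HOL-Analysis.Function_Topology"
begin

text \<open>For a diagonal metric g on a nice nilpotent Lie algebra the Ricci operator is diagonal,
  Ric e_l = 1/2 (M_Delta^T Y)_l e_l with Y(i,j,k) = (c_ij^k)^2 g_k / (g_i g_j). A diagonal map with
  entries d is a derivation iff M_Delta d = 0, and M_Delta [1] = -[1]; hence g is a nilsoliton iff
  M_Delta M_Delta^T Y is constant, which (as M_Delta M_Delta^T b = [1] and
  ker M_Delta M_Delta^T = ker M_Delta^T) means Y + 2 lambda b \<in> ker M_Delta^T for some lambda.
  The parity condition on delta makes every g_k / (g_i g_j) positive, so Y is the required X.
  Conversely, for g = +-e^x with the signs given by delta, Y = (c_ij^k)^2 e^(M_Delta x), so it
  suffices to solve M_Delta^T ((c_ij^k)^2 e^(M_Delta x)) = M_Delta^T X. A solution is a minimum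
  of the convex potential sum_r ((c_r)^2 e^((M_Delta x)_r) - X_r (M_Delta x)_r), which is coercive
  because X > 0, once the columns of M_Delta are made independent.\<close>

section \<open>Brackets, connection and Ricci tensor in the basis\<close>

lemma sum_mult_ev: "(\<Sum>i<n. f i * ev a i) = (if a < n then f a else 0)"
  by (simp add: ev_def if_distrib cong: if_cong)

lemma sum_ev_mult: "(\<Sum>i<n. ev a i * f i) = (if a < n then f a else 0)"
  using sum_mult_ev[of f a n] by (simp add: mult.commute)

lemma br_ev_left:
  assumes "a < n"
  shows "br n c (ev a) v k = (\<Sum>j<n. v j * c a j k)"
proof -
  have "br n c (ev a) v k = (\<Sum>i<n. ev a i * (\<Sum>j<n. v j * c i j k))"
    unfolding br_def by (simp add: sum_distrib_left mult.assoc)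
  also have "\<dots> = (\<Sum>j<n. v j * c a j k)"
    using assms by (simp add: sum_ev_mult)
  finally show ?thesis .
qed

lemma br_ev_right:
  assumes "b < n"
  shows "br n c v (ev b) k = (\<Sum>i<n. v i * c i b k)"
proof -
  have "br n c v (ev b) k = (\<Sum>i<n. v i * (\<Sum>j<n. ev b j * c i j k))"
    unfolding br_def by (simp add: sum_distrib_left mult.assoc mult.left_commute)
  also have "\<dots> = (\<Sum>i<n. v i * c i b k)"
    using assms by (simp add: sum_ev_mult)
  finally show ?thesis .
qed

lemma br_ev_ev: "a < n \<Longrightarrow> b < n \<Longrightarrow> br n c (ev a) (ev b) k = c a b k"
  by (simp add: br_ev_left sum_ev_mult)

definition christoffel :: "sconst \<Rightarrow> vec \<Rightarrow> nat \<Rightarrow> nat \<Rightarrow> nat \<Rightarrow> real" where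
  "christoffel c g a b l = (g l * c a b l - g a * c b l a + g b * c l a b) / (2 * g l)"

lemma lc_eq_christoffel_sum:
  assumes "l < n"
  shows "lc n c g x y l = (\<Sum>a<n. \<Sum>b<n. x a * y b * christoffel c g a b l)"
proof -
  have 1: "ip n g (br n c x y) (ev l) = g l * (\<Sum>a<n. \<Sum>b<n. x a * y b * c a b l)"
    unfolding ip_def br_def using assms by (simp add: sum_mult_ev)
  have "ip n g (br n c y (ev l)) x = (\<Sum>a<n. g a * (\<Sum>b<n. y b * c b l a) * x a)"
    unfolding ip_def using br_ev_right[OF assms] by simp
  also have "\<dots> = (\<Sum>a<n. \<Sum>b<n. x a * y b * (g a * c b l a))"
    by (simp add: sum_distrib_left sum_distrib_right mult_ac)
  finally have 2: "ip n g (br n c y (ev l)) x = \<dots>" .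
  have "ip n g (br n c (ev l) x) y = (\<Sum>b<n. g b * (\<Sum>a<n. x a * c l a b) * y b)"
    unfolding ip_def using br_ev_left[OF assms] by simp
  also have "\<dots> = (\<Sum>b<n. \<Sum>a<n. x a * y b * (g b * c l a b))"
    by (simp add: sum_distrib_left sum_distrib_right mult_ac)
  also have "\<dots> = (\<Sum>a<n. \<Sum>b<n. x a * y b * (g b * c l a b))"
    by (rule sum.swap)
  finally have 3: "ip n g (br n c (ev l) x) y = \<dots>" .
  have "lc n c g x y l
      = (\<Sum>a<n. \<Sum>b<n. x a * y b * (g l * c a b l - g a * c b l a + g b * c l a b)) / (2 * g l)"
    unfolding lc_def 1 2 3
    by (simp add: sum_distrib_left sum_subtractf[symmetric] sum.distrib[symmetric] algebra_simps)
  then show ?thesis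
    unfolding christoffel_def by (simp add: sum_divide_distrib)
qed

lemma lc_ev_left:
  assumes "a < n" "l < n"
  shows "lc n c g (ev a) y l = (\<Sum>b<n. y b * christoffel c g a b l)"
proof -
  have "lc n c g (ev a) y l = (\<Sum>a'<n. ev a a' * (\<Sum>b<n. y b * christoffel c g a' b l))"
    unfolding lc_eq_christoffel_sum[OF assms(2)] by (simp add: sum_distrib_left mult.assoc)
  then show ?thesis
    using assms(1) by (simp add: sum_ev_mult)
qed

lemma lc_ev_right:
  assumes "b < n" "l < n"
  shows "lc n c g x (ev b) l = (\<Sum>a<n. x a * christoffel c g a b l)"
proof -
  have "lc n c g x (ev b) l = (\<Sum>a<n. x a * (\<Sum>b'<n. ev b b' * christoffel c g a b' l))"
    unfolding lc_eq_christoffel_sum[OF assms(2)] by (simp add: sum_distrib_left mult_ac)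
  then show ?thesis
    using assms(1) by (simp add: sum_ev_mult)
qed

lemma lc_ev_ev: "a < n \<Longrightarrow> b < n \<Longrightarrow> l < n \<Longrightarrow> lc n c g (ev a) (ev b) l = christoffel c g a b l"
  by (simp add: lc_ev_left sum_ev_mult)

definition ricci_summand :: "sconst \<Rightarrow> vec \<Rightarrow> nat \<Rightarrow> nat \<Rightarrow> nat \<Rightarrow> nat \<Rightarrow> real" where
  "ricci_summand c g m l p q =
     christoffel c g m l q * christoffel c g p q p - christoffel c g p l q * christoffel c g m q p
     - c p m q * christoffel c g q l p"

lemma ric_ev_ev_eq_sum_ricci_summand:
  assumes "m < n" "l < n"
  shows "ric n c g (ev m) (ev l) = (\<Sum>p<n. \<Sum>q<n. ricci_summand c g m l p q)"
  unfolding ric_def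
proof (rule sum.cong[OF refl])
  fix p assume "p \<in> {..<n}"
  then have p: "p < n" by simp
  have 1: "lc n c g (ev p) (lc n c g (ev m) (ev l)) p
      = (\<Sum>q<n. christoffel c g m l q * christoffel c g p q p)"
    using p assms by (simp add: lc_ev_left lc_ev_ev sum_ev_mult)
  have 2: "lc n c g (ev m) (lc n c g (ev p) (ev l)) p
      = (\<Sum>q<n. christoffel c g p l q * christoffel c g m q p)"
    using p assms by (simp add: lc_ev_left lc_ev_ev sum_ev_mult)
  have 3: "lc n c g (br n c (ev p) (ev m)) (ev l) p = (\<Sum>q<n. c p m q * christoffel c g q l p)"
    using p assms by (simp add: lc_ev_right br_ev_ev)
  show "curv n c g (ev p) (ev m) (ev l) p = (\<Sum>q<n. ricci_summand c g m l p q)"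
    unfolding curv_def ricci_summand_def 1 2 3 by (simp add: sum_subtractf)
qed

definition ricci_summand_reduced :: "sconst \<Rightarrow> vec \<Rightarrow> nat \<Rightarrow> nat \<Rightarrow> nat \<Rightarrow> nat \<Rightarrow> real" where
  "ricci_summand_reduced c g m l p q =
     - (1/2) * g q * c p l q * c p m q / g p + (1/4) * g l * g m * c q p l * c q p m / (g p * g q)"

lemma ricci_summand_symmetrize:
  assumes anti: "\<And>i j k. i \<in> {l, m, p, q} \<Longrightarrow> j \<in> {l, m, p, q} \<Longrightarrow> k \<in> {l, m, p, q}
      \<Longrightarrow> c i j k = - c j i k"
    and "g p \<noteq> 0" "g q \<noteq> 0" "g l \<noteq> 0" "g m \<noteq> 0"
  shows "ricci_summand c g m l p q + ricci_summand c g m l q p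
     = ricci_summand_reduced c g m l p q + ricci_summand_reduced c g m l q p
       + (c p l q * c m q p) / 2 + (c l q p * c p m q) / 2
       + christoffel c g m l q * c p q p + christoffel c g m l p * c q p q"
proof -
  have "c l p q = - c p l q" "c q l p = - c l q p" "c p q l = - c q p l"
    "c q m p = - c m q p" "c p q m = - c q p m" "c m p q = - c p m q"
    "c q p p = - c p q p" "c p q q = - c q p q"
    by (rule anti; simp)+
  moreover have "c p p q = 0" "c q q p = 0"
    using anti[of p p q] anti[of q q p] by simp_all
  ultimately show ?thesis
    unfolding ricci_summand_def ricci_summand_reduced_def christoffel_def
    using assms(2-5) by (simp add: field_simps)
qed

section \<open>Nice nilpotent Lie algebras\<close>

lemma nice_nilpotent_antisym:
  "nice_nilpotent n c \<Longrightarrow> i < n \<Longrightarrow> j < n \<Longrightarrow> k < n \<Longrightarrow> c i j k = - c j i k"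
  unfolding nice_nilpotent_def is_lie_algebra_def by blast

lemma nice_nilpotent_bracket_target_unique:
  "nice_nilpotent n c \<Longrightarrow> i < n \<Longrightarrow> j < n \<Longrightarrow> k < n \<Longrightarrow> k' < n
   \<Longrightarrow> c i j k \<noteq> 0 \<Longrightarrow> c i j k' \<noteq> 0 \<Longrightarrow> k = k'"
  unfolding nice_nilpotent_def nice_def by blast

lemma nice_nilpotent_bracket_source_unique:
  "nice_nilpotent n c \<Longrightarrow> i < n \<Longrightarrow> j < n \<Longrightarrow> k < n \<Longrightarrow> k' < n
   \<Longrightarrow> c i k j \<noteq> 0 \<Longrightarrow> c i k' j \<noteq> 0 \<Longrightarrow> k = k'"
  unfolding nice_nilpotent_def nice_def by blast

lemma foldr_bracket_along_walk:
  assumes nn: "nice_nilpotent n c" and fn: "\<forall>t. f t < n"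
    and J: "\<forall>t. J t < n \<and> c (J t) (f t) (f (Suc t)) \<noteq> 0" and k: "k < n"
  shows "foldr (\<lambda>i v. br n c (ev i) v) (rev (map J [0..<t])) (ev (f 0)) k
    = (\<Prod>s<t. c (J s) (f s) (f (Suc s))) * ev (f t) k"
  using k
proof (induction t arbitrary: k)
  case 0
  then show ?case
    by simp
next
  case (Suc t)
  define V where "V = foldr (\<lambda>i v. br n c (ev i) v) (rev (map J [0..<t])) (ev (f 0))"
  define P where "P = (\<Prod>s<t. c (J s) (f s) (f (Suc s)))"
  have "foldr (\<lambda>i v. br n c (ev i) v) (rev (map J [0..<Suc t])) (ev (f 0)) k = br n c (ev (J t)) V k"
    by (simp add: V_def)
  also have "\<dots> = (\<Sum>j<n. V j * c (J t) j k)"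
    using J by (simp add: br_ev_left)
  also have "\<dots> = (\<Sum>j<n. ev (f t) j * (P * c (J t) j k))"
    using Suc.IH unfolding V_def P_def by (intro sum.cong) auto
  also have "\<dots> = P * c (J t) (f t) k"
    using fn by (simp add: sum_ev_mult)
  also have "\<dots> = P * c (J t) (f t) (f (Suc t)) * ev (f (Suc t)) k"
  proof (cases "c (J t) (f t) k = 0")
    case True
    then have "k \<noteq> f (Suc t)"
      using J by auto
    then show ?thesis
      using True by (simp add: ev_def)
  next
    case False
    then have "k = f (Suc t)"
      using nice_nilpotent_bracket_target_unique[OF nn _ _ Suc.prems _ False] J fn by blast
    then show ?thesis
      by (simp add: ev_def)
  qed
  finally show ?case
    by (simp add: P_def)
qed

lemma nice_nilpotent_no_infinite_walk:
  assumes nn: "nice_nilpotent n c" and fn: "\<forall>t. f t < n"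
    and step: "\<forall>t. \<exists>j<n. c j (f t) (f (Suc t)) \<noteq> 0"
  shows False
proof -
  obtain N where nil: "\<forall>is. length is = N \<longrightarrow> set is \<subseteq> {..<n} \<longrightarrow> (\<forall>y<n. \<forall>k<n.
         foldr (\<lambda>i v. br n c (ev i) v) is (ev y) k = 0)"
    using nn unfolding nice_nilpotent_def nilpotent_la_def by blast
  obtain J where J: "\<forall>t. J t < n \<and> c (J t) (f t) (f (Suc t)) \<noteq> 0"
    using step by metis
  have "foldr (\<lambda>i v. br n c (ev i) v) (rev (map J [0..<N])) (ev (f 0)) (f N)
      = (\<Prod>s<N. c (J s) (f s) (f (Suc s))) * ev (f N) (f N)"
    using fn by (intro foldr_bracket_along_walk[OF nn fn J]) simp
  moreover have "(\<Prod>s<N. c (J s) (f s) (f (Suc s))) \<noteq> 0"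
    using J by simp
  moreover have "foldr (\<lambda>i v. br n c (ev i) v) (rev (map J [0..<N])) (ev (f 0)) (f N) = 0"
    using nil[rule_format, of "rev (map J [0..<N])" "f 0" "f N"] fn J by auto
  ultimately show False
    by (simp add: ev_def)
qed

lemma nice_nilpotent_bracket_no_self_component:
  assumes nn: "nice_nilpotent n c" and x: "x < n" and y: "y < n"
  shows "c x y x = 0"
proof (rule ccontr)
  assume "c x y x \<noteq> 0"
  then have "c y x x \<noteq> 0"
    using nice_nilpotent_antisym[OF nn x y x] by simp
  then show False
    using nice_nilpotent_no_infinite_walk[OF nn, of "\<lambda>_. x"] x y by auto
qed

lemma nice_nilpotent_no_two_cycle:
  assumes nn: "nice_nilpotent n c" and "x < n" "y < n" "z < n" "w < n"
  shows "c z x y * c w y x = 0"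
proof (rule ccontr)
  assume h: "c z x y * c w y x \<noteq> 0"
  define f where "f t = (if even t then x else y)" for t :: nat
  have "\<forall>t. \<exists>j<n. c j (f t) (f (Suc t)) \<noteq> 0"
  proof
    fix t
    show "\<exists>j<n. c j (f t) (f (Suc t)) \<noteq> 0"
      using h assms by (cases "even t") (auto simp: f_def)
  qed
  moreover have "\<forall>t. f t < n"
    using assms by (simp add: f_def)
  ultimately show False
    using nice_nilpotent_no_infinite_walk[OF nn] by blast
qed

lemma ric_ev_ev_nice_nilpotent:
  assumes nn: "nice_nilpotent n c" and gnz: "\<forall>i<n. g i \<noteq> 0" and m: "m < n" and l: "l < n"
  shows "ric n c g (ev m) (ev l) = (\<Sum>p<n. \<Sum>q<n. ricci_summand_reduced c g m l p q)"
proof -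
  have pair: "ricci_summand c g m l p q + ricci_summand c g m l q p
      = ricci_summand_reduced c g m l p q + ricci_summand_reduced c g m l q p"
    if p: "p < n" and q: "q < n" for p q
  proof -
    have "c p l q * c m q p = 0"
      using nice_nilpotent_no_two_cycle[OF nn p q l m] nice_nilpotent_antisym[OF nn p l q] by simp
    moreover have "c l q p * c p m q = 0"
      using nice_nilpotent_no_two_cycle[OF nn p q m l] nice_nilpotent_antisym[OF nn p m q]
      by (simp add: mult.commute)
    moreover have "c p q p = 0" "c q p q = 0"
      using nice_nilpotent_bracket_no_self_component[OF nn] p q by auto
    moreover have anti: "c i j k = - c j i k"
      if "i \<in> {l, m, p, q}" "j \<in> {l, m, p, q}" "k \<in> {l, m, p, q}" for i j k
      using that nice_nilpotent_antisym[OF nn] p q l m by blast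
    have "ricci_summand c g m l p q + ricci_summand c g m l q p
       = ricci_summand_reduced c g m l p q + ricci_summand_reduced c g m l q p
         + (c p l q * c m q p) / 2 + (c l q p * c p m q) / 2
         + christoffel c g m l q * c p q p + christoffel c g m l p * c q p q"
      by (rule ricci_summand_symmetrize[OF anti]) (use gnz p q l m in auto)
    ultimately show ?thesis by (simp del: mult_eq_0_iff)
  qed
  have "2 * (\<Sum>p<n. \<Sum>q<n. ricci_summand c g m l p q)
      = (\<Sum>p<n. \<Sum>q<n. ricci_summand c g m l p q + ricci_summand c g m l q p)"
    using sum.swap[of "\<lambda>p q. ricci_summand c g m l p q" "{..<n}" "{..<n}"]
    by (simp add: sum.distrib)
  also have "\<dots> = (\<Sum>p<n. \<Sum>q<n. ricci_summand_reduced c g m l p q + ricci_summand_reduced c g m l q p)"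
    using pair by (intro sum.cong) auto
  also have "\<dots> = 2 * (\<Sum>p<n. \<Sum>q<n. ricci_summand_reduced c g m l p q)"
    using sum.swap[of "\<lambda>p q. ricci_summand_reduced c g m l p q" "{..<n}" "{..<n}"]
    by (simp add: sum.distrib)
  finally show ?thesis
    using ric_ev_ev_eq_sum_ricci_summand[OF m l] by simp
qed

section \<open>The root matrix\<close>

lemma sum_root_entry_triple:
  fixes x :: "nat \<Rightarrow> 'a::comm_ring_1"
  assumes "i < n" "j < n" "k < n"
  shows "(\<Sum>l<n. of_int (root_entry (i, j, k) l) * x l) = x k - x i - x j"
proof -
  have "(\<Sum>l<n. of_int (root_entry (i, j, k) l) * x l)
      = (\<Sum>l<n. (if k = l then x l else 0) - (if i = l then x l else 0) - (if j = l then x l else 0))"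
    by (intro sum.cong) (auto simp: root_entry_def)
  also have "\<dots> = x k - x i - x j"
    using assms by (simp add: sum_subtractf)
  finally show ?thesis .
qed

lemma root_app_triple:
  "i < n \<Longrightarrow> j < n \<Longrightarrow> k < n \<Longrightarrow> root_app n x (i, j, k) = x k - x i - x j"
  unfolding root_app_def by (rule sum_root_entry_triple)

lemma Delta_mem [simp]: "(i, j, k) \<in> Delta n c \<longleftrightarrow> i < j \<and> j < n \<and> k < n \<and> c i j k \<noteq> 0"
  by (simp add: Delta_def)

lemma finite_Delta: "finite (Delta n c)"
proof (rule finite_subset)
  show "Delta n c \<subseteq> {..<n} \<times> {..<n} \<times> {..<n}"
    by (auto simp: Delta_def)
qed simp

lemma rootT_app_add_scaled:
  "rootT_app n c (\<lambda>r. X r + t * Y r) l = rootT_app n c X l + t * rootT_app n c Y l"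
  unfolding rootT_app_def by (simp add: sum.distrib sum_distrib_left algebra_simps)

lemma root_app_add_scaled:
  "root_app n (\<lambda>l. x l + t * y l) r = root_app n x r + t * root_app n y r"
  unfolding root_app_def by (simp add: sum.distrib sum_distrib_left algebra_simps)

lemma rootT_app_cong:
  "(\<And>r. r \<in> Delta n c \<Longrightarrow> X r = Y r) \<Longrightarrow> rootT_app n c X l = rootT_app n c Y l"
  unfolding rootT_app_def by (intro sum.cong) auto

text \<open>The kernel of the Gram matrix M M^T is the kernel of M^T:
  |M^T Z|^2 = <Z, M M^T Z> = 0.\<close>
lemma rootT_app_zero_if_root_app_rootT_app_zero:
  assumes "\<forall>r\<in>Delta n c. root_app n (rootT_app n c Z) r = 0"
  shows "\<forall>l<n. rootT_app n c Z l = 0"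
proof -
  have "(\<Sum>l<n. (rootT_app n c Z l)\<^sup>2)
      = (\<Sum>l<n. rootT_app n c Z l * (\<Sum>r\<in>Delta n c. of_int (root_entry r l) * Z r))"
    unfolding rootT_app_def by (simp add: power2_eq_square)
  also have "\<dots> = (\<Sum>l<n. \<Sum>r\<in>Delta n c. Z r * (of_int (root_entry r l) * rootT_app n c Z l))"
    by (simp add: sum_distrib_left mult_ac)
  also have "\<dots> = (\<Sum>r\<in>Delta n c. \<Sum>l<n. Z r * (of_int (root_entry r l) * rootT_app n c Z l))"
    by (rule sum.swap)
  also have "\<dots> = (\<Sum>r\<in>Delta n c. Z r * root_app n (rootT_app n c Z) r)"
    unfolding root_app_def by (simp add: sum_distrib_left)
  also have "\<dots> = 0"
    using assms by simp
  finally show ?thesis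
    using sum_nonneg_eq_0_iff[of "{..<n}" "\<lambda>l. (rootT_app n c Z l)\<^sup>2"] by simp
qed

lemma rootT_app_kernel_iff:
  assumes b: "\<forall>r\<in>Delta n c. root_app n (rootT_app n c b) r = 1"
  shows "(\<forall>l<n. rootT_app n c (\<lambda>r. Y r + 2 * lam * b r) l = 0)
     \<longleftrightarrow> (\<forall>r\<in>Delta n c. root_app n (rootT_app n c Y) r = - 2 * lam)"
proof -
  have root_rootT: "root_app n (rootT_app n c (\<lambda>r. Y r + 2 * lam * b r)) r
      = root_app n (rootT_app n c Y) r + 2 * lam" if "r \<in> Delta n c" for r
  proof -
    have "rootT_app n c (\<lambda>r. Y r + 2 * lam * b r)
        = (\<lambda>l. rootT_app n c Y l + 2 * lam * rootT_app n c b l)"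
      by (rule ext) (rule rootT_app_add_scaled)
    then show ?thesis
      using b that by (simp add: root_app_add_scaled)
  qed
  show ?thesis
  proof
    assume "\<forall>l<n. rootT_app n c (\<lambda>r. Y r + 2 * lam * b r) l = 0"
    then have "root_app n (rootT_app n c (\<lambda>r. Y r + 2 * lam * b r)) r = 0" for r
      unfolding root_app_def by simp
    then show "\<forall>r\<in>Delta n c. root_app n (rootT_app n c Y) r = - 2 * lam"
      using root_rootT by force
  next
    assume "\<forall>r\<in>Delta n c. root_app n (rootT_app n c Y) r = - 2 * lam"
    then show "\<forall>l<n. rootT_app n c (\<lambda>r. Y r + 2 * lam * b r) l = 0"
      using root_rootT by (intro rootT_app_zero_if_root_app_rootT_app_zero) simp
  qed
qed

lemma sum_strict_upper_triangle:
  fixes H :: "nat \<Rightarrow> nat \<Rightarrow> real"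
  assumes sym: "\<And>i j. i < n \<Longrightarrow> j < n \<Longrightarrow> H i j = H j i"
    and diag: "\<And>i. i < n \<Longrightarrow> H i i = 0"
  shows "(\<Sum>i<n. \<Sum>j<n. if i < j then H i j else 0) = (1/2) * (\<Sum>i<n. \<Sum>j<n. H i j)"
proof -
  have split: "H i j = (if i < j then H i j else 0) + (if j < i then H i j else 0)"
    if "i < n" "j < n" for i j
    using diag[of i] that by (cases i j rule: linorder_cases) auto
  have "(\<Sum>i<n. \<Sum>j<n. H i j)
      = (\<Sum>i<n. \<Sum>j<n. if i < j then H i j else 0) + (\<Sum>i<n. \<Sum>j<n. if j < i then H i j else 0)"
    using split by (simp add: sum.distrib[symmetric])
  also have "(\<Sum>i<n. \<Sum>j<n. if j < i then H i j else 0) = (\<Sum>j<n. \<Sum>i<n. if j < i then H i j else 0)"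
    by (rule sum.swap)
  also have "\<dots> = (\<Sum>j<n. \<Sum>i<n. if j < i then H j i else 0)"
    using sym by (intro sum.cong) auto
  finally show ?thesis by simp
qed

lemma rootT_app_eq_half_sum:
  assumes sym: "\<And>i j k. i < n \<Longrightarrow> j < n \<Longrightarrow> k < n \<Longrightarrow> Y (i, j, k) = Y (j, i, k)"
    and diag: "\<And>i k. i < n \<Longrightarrow> k < n \<Longrightarrow> Y (i, i, k) = 0"
    and vanish: "\<And>i j k. c i j k = 0 \<Longrightarrow> Y (i, j, k) = 0"
  shows "rootT_app n c Y l
    = (1/2) * (\<Sum>i<n. \<Sum>j<n. \<Sum>k<n. of_int (root_entry (i, j, k) l) * Y (i, j, k))"
proof -
  define h where "h r = of_int (root_entry r l) * Y r" for r
  define S where "S = {r \<in> {..<n} \<times> {..<n} \<times> {..<n}. fst r < fst (snd r)}"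
  have "rootT_app n c Y l = sum h (Delta n c)"
    unfolding rootT_app_def h_def ..
  also have "\<dots> = sum h S"
    by (rule sum.mono_neutral_left) (auto simp: S_def Delta_def h_def vanish)
  also have "\<dots> = (\<Sum>r\<in>{..<n} \<times> {..<n} \<times> {..<n}. if fst r < fst (snd r) then h r else 0)"
    unfolding S_def by (simp add: sum.inter_filter)
  also have "\<dots> = (\<Sum>i<n. \<Sum>j<n. \<Sum>k<n. if i < j then h (i, j, k) else 0)"
    by (simp add: sum.cartesian_product split_def) (intro sum.cong refl, auto)
  also have "\<dots> = (\<Sum>i<n. \<Sum>j<n. if i < j then (\<Sum>k<n. h (i, j, k)) else 0)"
    by (intro sum.cong) auto
  also have "\<dots> = (1/2) * (\<Sum>i<n. \<Sum>j<n. \<Sum>k<n. h (i, j, k))"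
  proof (rule sum_strict_upper_triangle)
    fix i j assume "i < n" "j < n"
    then show "(\<Sum>k<n. h (i, j, k)) = (\<Sum>k<n. h (j, i, k))"
      using sym[of i j] by (intro sum.cong refl) (auto simp: h_def root_entry_def)
  next
    fix i assume "i < n"
    then show "(\<Sum>k<n. h (i, i, k)) = 0"
      by (simp add: h_def diag)
  qed
  finally show ?thesis
    unfolding h_def .
qed

lemma sum_root_entry_symmetric_weight:
  fixes Y :: "nat \<times> nat \<times> nat \<Rightarrow> real"
  assumes sym: "\<And>i j k. i < n \<Longrightarrow> j < n \<Longrightarrow> k < n \<Longrightarrow> Y (i, j, k) = Y (j, i, k)"
    and l: "l < n"
  shows "(\<Sum>i<n. \<Sum>j<n. \<Sum>k<n. of_int (root_entry (i, j, k) l) * Y (i, j, k))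
    = (\<Sum>i<n. \<Sum>j<n. Y (i, j, l)) - 2 * (\<Sum>j<n. \<Sum>k<n. Y (l, j, k))"
proof -
  have "(\<Sum>i<n. \<Sum>j<n. \<Sum>k<n. of_int (root_entry (i, j, k) l) * Y (i, j, k))
      = (\<Sum>i<n. \<Sum>j<n. \<Sum>k<n. (if k = l then Y (i, j, k) else 0)
          - (if i = l then Y (i, j, k) else 0) - (if j = l then Y (i, j, k) else 0))"
    by (intro sum.cong) (auto simp: root_entry_def)
  also have "\<dots> = (\<Sum>i<n. \<Sum>j<n. Y (i, j, l))
      - (\<Sum>i<n. if i = l then (\<Sum>j<n. \<Sum>k<n. Y (i, j, k)) else 0)
      - (\<Sum>i<n. \<Sum>j<n. if j = l then (\<Sum>k<n. Y (i, j, k)) else 0)"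
  proof -
    have "(\<Sum>k<n. if k = l then Y (i, j, k) else 0) = Y (i, j, l)" for i j
      using l by simp
    moreover have "(\<Sum>j<n. \<Sum>k<n. if i = l then Y (i, j, k) else 0)
        = (if i = l then (\<Sum>j<n. \<Sum>k<n. Y (i, j, k)) else 0)" for i
      by (cases "i = l") auto
    moreover have "(\<Sum>k<n. if j = l then Y (i, j, k) else 0)
        = (if j = l then (\<Sum>k<n. Y (i, j, k)) else 0)" for i j
      by (cases "j = l") auto
    ultimately show ?thesis
      by (simp only: sum_subtractf)
  qed
  also have "\<dots> = (\<Sum>i<n. \<Sum>j<n. Y (i, j, l)) - (\<Sum>j<n. \<Sum>k<n. Y (l, j, k))
      - (\<Sum>i<n. \<Sum>k<n. Y (i, l, k))"
    using l by simp
  also have "(\<Sum>i<n. \<Sum>k<n. Y (i, l, k)) = (\<Sum>i<n. \<Sum>k<n. Y (l, i, k))"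
    using sym l by (intro sum.cong) auto
  finally show ?thesis by simp
qed

section \<open>Diagonal nilsoliton metrics\<close>

definition metric_weight :: "sconst \<Rightarrow> vec \<Rightarrow> nat \<times> nat \<times> nat \<Rightarrow> real" where
  "metric_weight c g = (\<lambda>(i, j, k). (c i j k)\<^sup>2 * g k / (g i * g j))"

lemma rootT_app_metric_weight:
  assumes nn: "nice_nilpotent n c" and l: "l < n"
  shows "rootT_app n c (metric_weight c g) l
    = (1/2) * (\<Sum>i<n. \<Sum>j<n. metric_weight c g (i, j, l)) - (\<Sum>j<n. \<Sum>k<n. metric_weight c g (l, j, k))"
proof -
  have sym: "metric_weight c g (i, j, k) = metric_weight c g (j, i, k)"
    if "i < n" "j < n" "k < n" for i j k
    using nice_nilpotent_antisym[OF nn that] by (simp add: metric_weight_def mult.commute)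
  have diag: "metric_weight c g (i, i, k) = 0" if "i < n" "k < n" for i k
    using nice_nilpotent_antisym[OF nn that(1) that] by (simp add: metric_weight_def)
  have vanish: "metric_weight c g (i, j, k) = 0" if "c i j k = 0" for i j k
    using that by (simp add: metric_weight_def)
  have "rootT_app n c (metric_weight c g) l
      = (1/2) * (\<Sum>i<n. \<Sum>j<n. \<Sum>k<n. of_int (root_entry (i, j, k) l) * metric_weight c g (i, j, k))"
    using sym diag vanish by (rule rootT_app_eq_half_sum)
  also have "(\<Sum>i<n. \<Sum>j<n. \<Sum>k<n. of_int (root_entry (i, j, k) l) * metric_weight c g (i, j, k))
      = (\<Sum>i<n. \<Sum>j<n. metric_weight c g (i, j, l)) - 2 * (\<Sum>j<n. \<Sum>k<n. metric_weight c g (l, j, k))"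
    using sym l by (rule sum_root_entry_symmetric_weight)
  finally show ?thesis
    by simp
qed

lemma ricop_nice_nilpotent:
  assumes nn: "nice_nilpotent n c" and gnz: "\<forall>i<n. g i \<noteq> 0" and l: "l < n" and m: "m < n"
  shows "ricop n c g l m = (if l = m then rootT_app n c (metric_weight c g) l / 2 else 0)"
proof -
  have ricop_sum: "ricop n c g l m = (\<Sum>p<n. \<Sum>q<n. ricci_summand_reduced c g m l p q / g l)"
    unfolding ricop_def ric_ev_ev_nice_nilpotent[OF nn gnz m l] by (simp add: sum_divide_distrib)
  show ?thesis
  proof (cases "l = m")
    case False
    have "ricci_summand_reduced c g m l p q = 0" if p: "p < n" and q: "q < n" for p q
    proof -
      have "c p l q * c p m q = 0"
        using nice_nilpotent_bracket_source_unique[OF nn p q l m] False by auto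
      moreover have "c q p l * c q p m = 0"
        using nice_nilpotent_bracket_target_unique[OF nn q p l m] False by auto
      ultimately show ?thesis
        unfolding ricci_summand_reduced_def by (simp add: mult.assoc del: mult_eq_0_iff)
    qed
    then show ?thesis
      using ricop_sum False by simp
  next
    case True
    have "ricci_summand_reduced c g l l p q / g l
        = - (1/2) * metric_weight c g (l, p, q) + (1/4) * metric_weight c g (q, p, l)"
      if p: "p < n" and q: "q < n" for p q
      using nice_nilpotent_antisym[OF nn p l q] gnz p q l
      by (simp add: ricci_summand_reduced_def metric_weight_def field_simps power2_eq_square)
    then have "ricop n c g l m
        = (\<Sum>p<n. \<Sum>q<n. - (1/2) * metric_weight c g (l, p, q) + (1/4) * metric_weight c g (q, p, l))"
      using ricop_sum True by simp
    also have "\<dots> = - (1/2) * (\<Sum>p<n. \<Sum>q<n. metric_weight c g (l, p, q))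
        + (1/4) * (\<Sum>p<n. \<Sum>q<n. metric_weight c g (q, p, l))"
      by (simp only: sum.distrib sum_distrib_left)
    also have "(\<Sum>p<n. \<Sum>q<n. metric_weight c g (q, p, l)) = (\<Sum>q<n. \<Sum>p<n. metric_weight c g (q, p, l))"
      by (rule sum.swap)
    finally show ?thesis
      using True rootT_app_metric_weight[OF nn l, of g] by simp
  qed
qed

lemma derivation_diagonal_iff:
  assumes D: "\<forall>l<n. \<forall>m<n. D l m = (if l = m then d l else 0)"
  shows "derivation n c D \<longleftrightarrow> (\<forall>i<n. \<forall>j<n. \<forall>k<n. d k * c i j k = d i * c i j k + d j * c i j k)"
proof -
  have column: "mat_app n D (ev i) a = D a i" if "i < n" for i a
    unfolding mat_app_def using that by (simp add: sum_mult_ev)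
  have "mat_app n D (br n c (ev i) (ev j)) k = d k * c i j k"
    if "i < n" "j < n" "k < n" for i j k
  proof -
    have "mat_app n D (br n c (ev i) (ev j)) k = (\<Sum>m<n. D k m * c i j m)"
      unfolding mat_app_def using that by (simp add: br_ev_ev)
    also have "\<dots> = (\<Sum>m<n. if m = k then d k * c i j m else 0)"
      using D that by (intro sum.cong) auto
    finally show ?thesis
      using that by simp
  qed
  moreover have "br n c (mat_app n D (ev i)) (ev j) k = d i * c i j k"
    if "i < n" "j < n" "k < n" for i j k
  proof -
    have "br n c (mat_app n D (ev i)) (ev j) k = (\<Sum>a<n. D a i * c a j k)"
      using that by (simp add: br_ev_right column)
    also have "\<dots> = (\<Sum>a<n. if a = i then d i * c a j k else 0)"
      using D that by (intro sum.cong) auto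
    finally show ?thesis
      using that by simp
  qed
  moreover have "br n c (ev i) (mat_app n D (ev j)) k = d j * c i j k"
    if "i < n" "j < n" "k < n" for i j k
  proof -
    have "br n c (ev i) (mat_app n D (ev j)) k = (\<Sum>b<n. D b j * c i b k)"
      using that by (simp add: br_ev_left column)
    also have "\<dots> = (\<Sum>b<n. if b = j then d j * c i b k else 0)"
      using D that by (intro sum.cong) auto
    finally show ?thesis
      using that by simp
  qed
  ultimately show ?thesis
    unfolding derivation_def by auto
qed

lemma derivation_diagonal_iff_Delta:
  assumes nn: "nice_nilpotent n c" and D: "\<forall>l<n. \<forall>m<n. D l m = (if l = m then d l else 0)"
  shows "derivation n c D \<longleftrightarrow> (\<forall>(i, j, k)\<in>Delta n c. d k = d i + d j)"
  unfolding derivation_diagonal_iff[OF D]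
proof (intro iffI ballI allI impI; clarify?)
  fix i j k
  assume all: "\<forall>i<n. \<forall>j<n. \<forall>k<n. d k * c i j k = d i * c i j k + d j * c i j k"
    and "(i, j, k) \<in> Delta n c"
  then have "i < n" "j < n" "k < n" "c i j k \<noteq> 0"
    by auto
  then show "d k = d i + d j"
    using all[rule_format, of i j k] by (simp add: distrib_right[symmetric])
next
  fix i j k
  assume Delta: "\<forall>(i, j, k)\<in>Delta n c. d k = d i + d j" and ijk: "i < n" "j < n" "k < n"
  have anti: "c i j k = - c j i k"
    using nice_nilpotent_antisym[OF nn ijk] .
  consider "c i j k = 0" | "c i j k \<noteq> 0" "i < j" | "c i j k \<noteq> 0" "j < i"
    using nice_nilpotent_antisym[OF nn ijk(1) ijk(1) ijk(3)] by (cases i j rule: linorder_cases) auto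
  then show "d k * c i j k = d i * c i j k + d j * c i j k"
  proof cases
    case 2
    then show ?thesis
      using bspec[OF Delta, of "(i, j, k)"] ijk by (simp add: distrib_right)
  next
    case 3
    then have "(j, i, k) \<in> Delta n c"
      using ijk anti by auto
    then show ?thesis
      using bspec[OF Delta, of "(j, i, k)"] by (simp add: algebra_simps)
  qed simp
qed

lemma nilsoliton_iff_root_app_rootT_app:
  assumes nn: "nice_nilpotent n c" and gnz: "\<forall>i<n. g i \<noteq> 0"
  shows "nilsoliton n c g
    \<longleftrightarrow> (\<exists>lam. \<forall>r\<in>Delta n c. root_app n (rootT_app n c (metric_weight c g)) r = - 2 * lam)"
proof -
  let ?Y = "rootT_app n c (metric_weight c g)"
  have ricop: "ricop n c g l m = (if l = m then ?Y l / 2 else 0)" if "l < n" "m < n" for l m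
    using ricop_nice_nilpotent[OF nn gnz that] .
  have derivation_iff: "derivation n c D \<longleftrightarrow> (\<forall>r\<in>Delta n c. root_app n ?Y r = - 2 * lam)"
    if D: "\<forall>l<n. \<forall>m<n. ricop n c g l m = (if l = m then lam else 0) + D l m" for lam D
  proof -
    have "D l m = (if l = m then ?Y l / 2 - lam else 0)" if "l < n" "m < n" for l m
      using D[rule_format, OF that] ricop[OF that] by (cases "l = m") auto
    then have "\<forall>l<n. \<forall>m<n. D l m = (if l = m then ?Y l / 2 - lam else 0)"
      by blast
    then have "derivation n c D
        \<longleftrightarrow> (\<forall>(i, j, k)\<in>Delta n c. ?Y k / 2 - lam = (?Y i / 2 - lam) + (?Y j / 2 - lam))"
      by (rule derivation_diagonal_iff_Delta[OF nn])
    also have "\<dots> \<longleftrightarrow> (\<forall>r\<in>Delta n c. root_app n ?Y r = - 2 * lam)"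
      by (auto simp: root_app_triple)
    finally show ?thesis .
  qed
  show ?thesis
  proof
    assume "nilsoliton n c g"
    then obtain lam D where "derivation n c D"
      and "\<forall>l<n. \<forall>m<n. ricop n c g l m = (if l = m then lam else 0) + D l m"
      unfolding nilsoliton_def by blast
    then show "\<exists>lam. \<forall>r\<in>Delta n c. root_app n ?Y r = - 2 * lam"
      using derivation_iff by blast
  next
    assume "\<exists>lam. \<forall>r\<in>Delta n c. root_app n ?Y r = - 2 * lam"
    then obtain lam where lam: "\<forall>r\<in>Delta n c. root_app n ?Y r = - 2 * lam"
      by blast
    define D where "D l m = ricop n c g l m - (if l = m then lam else 0)" for l m
    have "derivation n c D"
      using derivation_iff[of lam D] lam by (simp add: D_def)
    then show "nilsoliton n c g"
      unfolding nilsoliton_def by (intro exI[of _ lam] exI[of _ D]) (simp add: D_def)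
  qed
qed

lemma nilsoliton_iff_rootT_kernel:
  assumes "nice_nilpotent n c" and "\<forall>i<n. g i \<noteq> 0"
    and "\<forall>r\<in>Delta n c. root_app n (rootT_app n c b) r = 1"
  shows "nilsoliton n c g
    \<longleftrightarrow> (\<exists>lam. \<forall>l<n. rootT_app n c (\<lambda>r. metric_weight c g r + 2 * lam * b r) l = 0)"
  by (simp only: nilsoliton_iff_root_app_rootT_app[OF assms(1,2)] rootT_app_kernel_iff[OF assms(3)])

section \<open>Solving M^T (a e^(M x)) = M^T X\<close>

lemma continuous_map_attains_min:
  assumes "compactin X K" "K \<noteq> {}" "continuous_map X euclideanreal f"
  shows "\<exists>x\<in>K. \<forall>y\<in>K. f x \<le> f y"
proof -
  have "compact (f ` K)"
    using image_compactin[OF assms(1,3)] by simp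
  then obtain m where "m \<in> f ` K" "\<forall>z\<in>f ` K. m \<le> z"
    using compact_attains_inf[of "f ` K"] assms(2) by auto
  then show ?thesis
    by auto
qed

lemma compactin_unit_sphere:
  assumes fC: "finite C"
  shows "compactin (product_topology (\<lambda>_. euclideanreal) C)
    {y \<in> topspace (product_topology (\<lambda>_. euclideanreal) C). (\<Sum>j\<in>C. (y j)\<^sup>2) = 1}"
    (is "compactin ?T ?S")
proof (rule closed_compactin)
  show "compactin ?T (PiE C (\<lambda>_. {-1..1}))"
    by (simp add: compactin_PiE)
  show "?S \<subseteq> PiE C (\<lambda>_. {-1..1})"
  proof
    fix y assume y: "y \<in> ?S"
    have "\<bar>y j\<bar> \<le> 1" if "j \<in> C" for j
    proof -
      have "(y j)\<^sup>2 \<le> (\<Sum>j\<in>C. (y j)\<^sup>2)"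
        using member_le_sum[of j C "\<lambda>j. (y j)\<^sup>2"] that fC by auto
      then show ?thesis
        using y abs_le_square_iff[of "y j" 1] by simp
    qed
    then show "y \<in> PiE C (\<lambda>_. {-1..1})"
      using y by (auto simp: PiE_iff abs_le_iff)
  qed
  have "continuous_map ?T euclideanreal (\<lambda>y. \<Sum>j\<in>C. (y j)\<^sup>2)"
    using fC by (intro continuous_intros) auto
  from closedin_continuous_map_preimage[OF this, of "{1}"]
  show "closedin ?T ?S"
    by simp
qed

lemma injective_linear_map_bounded_below_on_sphere:
  fixes A :: "'r \<Rightarrow> nat \<Rightarrow> real"
  assumes fR: "finite R" and fC: "finite C" and "C \<noteq> {}"
    and inj: "\<forall>y. (\<forall>r\<in>R. (\<Sum>j\<in>C. A r j * y j) = 0) \<longrightarrow> (\<forall>j\<in>C. y j = 0)"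
  shows "\<exists>\<epsilon>>0. \<forall>y\<in>topspace (product_topology (\<lambda>_. euclideanreal) C).
    (\<Sum>j\<in>C. (y j)\<^sup>2) = 1 \<longrightarrow> \<epsilon> \<le> (\<Sum>r\<in>R. (\<Sum>j\<in>C. A r j * y j)\<^sup>2)"
proof -
  obtain k where k: "k \<in> C"
    using \<open>C \<noteq> {}\<close> by auto
  let ?T = "product_topology (\<lambda>_. euclideanreal) C"
  define N where "N y = (\<Sum>r\<in>R. (\<Sum>j\<in>C. A r j * y j)\<^sup>2)" for y :: "nat \<Rightarrow> real"
  define S where "S = {y \<in> topspace ?T. (\<Sum>j\<in>C. (y j)\<^sup>2) = 1}"
  have "(\<Sum>j\<in>C. (restrict (\<lambda>j. if j = k then 1 else 0) C j)\<^sup>2) = (\<Sum>j\<in>C. if j = k then 1 else 0 :: real)"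
    by (rule sum.cong) auto
  then have "restrict (\<lambda>j. if j = k then 1 else 0) C \<in> S"
    using k fC by (simp add: S_def)
  moreover have "continuous_map ?T euclideanreal N"
    unfolding N_def using fC fR by (intro continuous_intros) auto
  ultimately obtain z where z: "z \<in> S" "\<forall>y\<in>S. N z \<le> N y"
    using continuous_map_attains_min[OF compactin_unit_sphere[OF fC]] unfolding S_def by blast
  have "N z \<ge> 0"
    unfolding N_def by (simp add: sum_nonneg)
  have "N z > 0"
  proof (rule ccontr)
    assume "\<not> N z > 0"
    with \<open>N z \<ge> 0\<close> have "\<forall>r\<in>R. (\<Sum>j\<in>C. A r j * z j)\<^sup>2 = 0"
      using fR sum_nonneg_eq_0_iff[of R "\<lambda>r. (\<Sum>j\<in>C. A r j * z j)\<^sup>2"] by (simp add: N_def)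
    then have "(\<Sum>j\<in>C. (z j)\<^sup>2) = 0"
      using inj[rule_format, of z] by simp
    then show False
      using z(1) by (simp add: S_def)
  qed
  with z(2) show ?thesis
    unfolding S_def N_def by blast
qed

lemma injective_linear_map_bounded_below:
  fixes A :: "'r \<Rightarrow> nat \<Rightarrow> real"
  assumes fR: "finite R" and fC: "finite C"
    and inj: "\<forall>y. (\<forall>r\<in>R. (\<Sum>j\<in>C. A r j * y j) = 0) \<longrightarrow> (\<forall>j\<in>C. y j = 0)"
  shows "\<exists>\<epsilon>>0. \<forall>y. \<epsilon> * (\<Sum>j\<in>C. (y j)\<^sup>2) \<le> (\<Sum>r\<in>R. (\<Sum>j\<in>C. A r j * y j)\<^sup>2)"
proof (cases "C = {}")
  case True
  then show ?thesis
    by (intro exI[of _ 1]) (simp add: sum_nonneg)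
next
  case False
  define sq where "sq y = (\<Sum>j\<in>C. (y j)\<^sup>2)" for y :: "nat \<Rightarrow> real"
  define N where "N y = (\<Sum>r\<in>R. (\<Sum>j\<in>C. A r j * y j)\<^sup>2)" for y :: "nat \<Rightarrow> real"
  obtain \<epsilon> where \<epsilon>: "\<epsilon> > 0"
    and sphere: "\<forall>y\<in>topspace (product_topology (\<lambda>_. euclideanreal) C). sq y = 1 \<longrightarrow> \<epsilon> \<le> N y"
    using injective_linear_map_bounded_below_on_sphere[OF fR fC False inj]
    unfolding sq_def N_def by blast
  have "\<epsilon> * sq y \<le> N y" for y
  proof (cases "sq y = 0")
    case True
    then show ?thesis
      by (simp add: N_def sum_nonneg)
  next
    case False
    then have sq_pos: "sq y > 0"
      unfolding sq_def by (simp add: sum_nonneg order_le_neq_trans)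
    define t where "t = sqrt (sq y)"
    have t: "t > 0" "t\<^sup>2 = sq y"
      using sq_pos by (simp_all add: t_def)
    define y' where "y' = restrict (\<lambda>j. y j / t) C"
    have "sq y' = sq y / t\<^sup>2"
      unfolding sq_def y'_def by (simp add: power_divide sum_divide_distrib)
    then have "\<epsilon> \<le> N y'"
      using sphere t sq_pos by (simp add: y'_def)
    moreover have "(\<Sum>j\<in>C. A r j * y' j)\<^sup>2 = (\<Sum>j\<in>C. A r j * y j)\<^sup>2 / t\<^sup>2" for r
      unfolding y'_def by (simp add: sum_divide_distrib[symmetric] power_divide)
    then have "N y' = N y / sq y"
      unfolding N_def t(2)[symmetric] by (simp add: sum_divide_distrib)
    ultimately show ?thesis
      using sq_pos by (simp add: field_simps)
  qed
  with \<epsilon> show ?thesis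
    unfolding sq_def N_def by blast
qed

text \<open>The critical points of this potential are the solutions x of A^T (a e^(A x)) = A^T X.\<close>
definition exp_potential ::
  "'r set \<Rightarrow> nat set \<Rightarrow> ('r \<Rightarrow> nat \<Rightarrow> real) \<Rightarrow> ('r \<Rightarrow> real) \<Rightarrow> ('r \<Rightarrow> real) \<Rightarrow> (nat \<Rightarrow> real) \<Rightarrow> real"
  where "exp_potential R C A a X x =
    (\<Sum>r\<in>R. a r * exp (\<Sum>j\<in>C. A r j * x j) - X r * (\<Sum>j\<in>C. A r j * x j))"

lemma exp_minus_linear_lower_bound:
  fixes a X u :: real
  assumes a: "a > 0" and X: "X > 0"
  shows "X * \<bar>u\<bar> - 2 * X * \<bar>ln (2 * X / a)\<bar> \<le> a * exp u - X * u"
proof -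
  define s where "s = ln (2 * X / a)"
  \<comment> \<open>tangent line of a e^u at the point s where its slope is 2 X\<close>
  have "exp s * (1 + (u - s)) \<le> exp s * exp (u - s)"
    by (simp add: exp_ge_add_one_self)
  also have "\<dots> = exp u"
    by (simp add: exp_diff)
  also have "exp s = 2 * X / a"
    using a X by (simp add: s_def)
  finally have "2 * X * (1 + (u - s)) \<le> a * exp u"
    using a by (simp add: field_simps)
  then have "2 * (X * u) \<le> a * exp u - 2 * X + 2 * (X * s)"
    by (simp add: algebra_simps)
  moreover have "X * s \<le> X * \<bar>s\<bar>" "0 \<le> X * \<bar>s\<bar>" "0 < a * exp u"
    using a X by (simp_all add: mult_left_mono)
  moreover have "X * \<bar>u\<bar> = X * u \<or> X * \<bar>u\<bar> = - (X * u) \<and> u < 0"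
    by (cases "u \<ge> 0") simp_all
  moreover have "u < 0 \<Longrightarrow> X * u < 0"
    using X by (simp add: mult_pos_neg)
  ultimately show ?thesis
    unfolding s_def[symmetric] using X by linarith
qed

lemma continuous_map_real_exp [continuous_intros]:
  assumes "continuous_map X euclideanreal f"
  shows "continuous_map X euclideanreal (\<lambda>x. exp (f x))"
proof -
  have "continuous_map euclideanreal euclideanreal exp"
    by (simp add: continuous_on_exp continuous_on_id)
  from continuous_map_compose[OF assms this] show ?thesis
    by (simp add: o_def)
qed

lemma exp_potential_sublevel_row_bound:
  fixes A :: "'r \<Rightarrow> nat \<Rightarrow> real"
  assumes fR: "finite R" and a: "\<forall>r\<in>R. a r > 0" and X: "\<forall>r\<in>R. X r > 0"
    and x: "exp_potential R C A a X x \<le> (\<Sum>r\<in>R. a r)" and r: "r \<in> R"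
  shows "X r * \<bar>\<Sum>j\<in>C. A r j * x j\<bar> \<le> (\<Sum>r\<in>R. a r) + (\<Sum>r\<in>R. 2 * X r * \<bar>ln (2 * X r / a r)\<bar>)"
proof -
  have "(\<Sum>r\<in>R. X r * \<bar>\<Sum>j\<in>C. A r j * x j\<bar> - 2 * X r * \<bar>ln (2 * X r / a r)\<bar>)
      \<le> exp_potential R C A a X x"
    unfolding exp_potential_def using a X by (intro sum_mono exp_minus_linear_lower_bound) auto
  then have "(\<Sum>r\<in>R. X r * \<bar>\<Sum>j\<in>C. A r j * x j\<bar>)
      \<le> (\<Sum>r\<in>R. a r) + (\<Sum>r\<in>R. 2 * X r * \<bar>ln (2 * X r / a r)\<bar>)"
    using x by (simp add: sum_subtractf)
  moreover have "X r * \<bar>\<Sum>j\<in>C. A r j * x j\<bar> \<le> (\<Sum>r\<in>R. X r * \<bar>\<Sum>j\<in>C. A r j * x j\<bar>)"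
    using X fR r by (intro member_le_sum) (auto simp: less_imp_le)
  ultimately show ?thesis
    by linarith
qed

lemma exp_potential_sublevel_bounded:
  fixes A :: "'r \<Rightarrow> nat \<Rightarrow> real"
  assumes fR: "finite R" and fC: "finite C"
    and inj: "\<forall>y. (\<forall>r\<in>R. (\<Sum>j\<in>C. A r j * y j) = 0) \<longrightarrow> (\<forall>j\<in>C. y j = 0)"
    and a: "\<forall>r\<in>R. a r > 0" and X: "\<forall>r\<in>R. X r > 0"
  shows "\<exists>\<rho>>0. \<forall>x. exp_potential R C A a X x \<le> (\<Sum>r\<in>R. a r) \<longrightarrow> (\<forall>j\<in>C. \<bar>x j\<bar> < \<rho>)"
proof -
  obtain \<epsilon> where \<epsilon>: "\<epsilon> > 0" "\<forall>y. \<epsilon> * (\<Sum>j\<in>C. (y j)\<^sup>2) \<le> (\<Sum>r\<in>R. (\<Sum>j\<in>C. A r j * y j)\<^sup>2)"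
    using injective_linear_map_bounded_below[OF fR fC inj] by blast
  define u where "u r x = (\<Sum>j\<in>C. A r j * x j)" for r x
  define K where "K = (\<Sum>r\<in>R. a r) + (\<Sum>r\<in>R. 2 * X r * \<bar>ln (2 * X r / a r)\<bar>)"
  define Q where "Q = (\<Sum>r\<in>R. (K / X r)\<^sup>2)"
  have bound: "\<bar>x j\<bar> < sqrt (Q / \<epsilon>) + 1"
    if x: "exp_potential R C A a X x \<le> (\<Sum>r\<in>R. a r)" and j: "j \<in> C" for x j
  proof -
    have "(u r x)\<^sup>2 \<le> (K / X r)\<^sup>2" if r: "r \<in> R" for r
    proof -
      have "\<bar>u r x\<bar> \<le> K / X r"
        using exp_potential_sublevel_row_bound[OF fR a X x r] X r
        by (simp add: K_def u_def field_simps)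
      then show ?thesis
        by (metis abs_ge_zero order_trans power2_abs power_mono)
    qed
    then have "\<epsilon> * (\<Sum>j\<in>C. (x j)\<^sup>2) \<le> Q"
      using \<epsilon>(2)[rule_format, of x] sum_mono[of R "\<lambda>r. (u r x)\<^sup>2" "\<lambda>r. (K / X r)\<^sup>2"]
      unfolding Q_def u_def by auto
    moreover have "(x j)\<^sup>2 \<le> (\<Sum>j\<in>C. (x j)\<^sup>2)"
      using member_le_sum[of j C "\<lambda>j. (x j)\<^sup>2"] j fC by auto
    ultimately have "\<epsilon> * (x j)\<^sup>2 \<le> Q"
      using \<epsilon>(1) by (meson less_imp_le mult_left_mono order_trans)
    then have "(x j)\<^sup>2 \<le> Q / \<epsilon>"
      using \<epsilon>(1) by (simp add: field_simps)
    then have "sqrt ((x j)\<^sup>2) \<le> sqrt (Q / \<epsilon>)"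
      by (rule real_sqrt_le_mono)
    then show ?thesis
      by simp
  qed
  have "Q \<ge> 0"
    unfolding Q_def by (simp add: sum_nonneg)
  then have "sqrt (Q / \<epsilon>) + 1 > 0"
    using \<epsilon>(1) by (simp add: add_nonneg_pos)
  with bound show ?thesis
    by (intro exI[of _ "sqrt (Q / \<epsilon>) + 1"]) simp
qed

lemma exp_potential_attains_min:
  fixes A :: "'r \<Rightarrow> nat \<Rightarrow> real"
  assumes fR: "finite R" and fC: "finite C"
    and inj: "\<forall>y. (\<forall>r\<in>R. (\<Sum>j\<in>C. A r j * y j) = 0) \<longrightarrow> (\<forall>j\<in>C. y j = 0)"
    and a: "\<forall>r\<in>R. a r > 0" and X: "\<forall>r\<in>R. X r > 0"
  shows "\<exists>x. \<forall>y. exp_potential R C A a X x \<le> exp_potential R C A a X y"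
proof -
  let ?F = "exp_potential R C A a X"
  let ?T = "product_topology (\<lambda>_. euclideanreal) C"
  obtain \<rho> where \<rho>: "\<rho> > 0" "\<forall>x. ?F x \<le> (\<Sum>r\<in>R. a r) \<longrightarrow> (\<forall>j\<in>C. \<bar>x j\<bar> < \<rho>)"
    using exp_potential_sublevel_bounded[OF assms] by blast
  define B where "B = PiE C (\<lambda>_. {-\<rho>..\<rho>})"
  have F_restrict: "?F (restrict y C) = ?F y" for y
    unfolding exp_potential_def by (simp cong: sum.cong)
  have zero_B: "restrict (\<lambda>_. 0) C \<in> B"
    using \<rho>(1) by (simp add: B_def)
  have F_zero: "?F (restrict (\<lambda>_. 0) C) = (\<Sum>r\<in>R. a r)"
    unfolding F_restrict by (simp add: exp_potential_def)
  have "compactin ?T B"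
    unfolding B_def by (simp add: compactin_PiE)
  moreover have "B \<noteq> {}"
    using zero_B by blast
  moreover have "continuous_map ?T euclideanreal ?F"
    unfolding exp_potential_def using fC fR by (intro continuous_intros) auto
  ultimately obtain x where x: "x \<in> B" "\<forall>y\<in>B. ?F x \<le> ?F y"
    by (blast dest: continuous_map_attains_min)
  have "?F x \<le> ?F y" for y
  proof (cases "?F y \<le> (\<Sum>r\<in>R. a r)")
    case True
    then have "restrict y C \<in> B"
      using \<rho>(2) by (fastforce simp: B_def abs_le_iff)
    then show ?thesis
      using x(2) F_restrict by metis
  next
    case False
    then show ?thesis
      using x(2) zero_B F_zero by force
  qed
  then show ?thesis
    by blast
qed

lemma exp_potential_min_gradient:
  fixes A :: "'r \<Rightarrow> nat \<Rightarrow> real"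
  assumes fR: "finite R" and fC: "finite C" and l: "l \<in> C"
    and min: "\<forall>y. exp_potential R C A a X x \<le> exp_potential R C A a X y"
  shows "(\<Sum>r\<in>R. A r l * (a r * exp (\<Sum>j\<in>C. A r j * x j))) = (\<Sum>r\<in>R. A r l * X r)"
proof -
  define u where "u r = (\<Sum>j\<in>C. A r j * x j)" for r
  have shift: "(\<Sum>j\<in>C. A r j * (x(l := x l + t)) j) = u r + A r l * t" for r t
  proof -
    have "(\<Sum>j\<in>C. A r j * (x(l := x l + t)) j) = (\<Sum>j\<in>C. A r j * x j + (if j = l then A r l * t else 0))"
      by (rule sum.cong) (auto simp: algebra_simps)
    then show ?thesis
      using l fC by (simp add: sum.distrib u_def)
  qed
  define h where "h t = exp_potential R C A a X (x(l := x l + t))" for t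
  have h_eq: "h = (\<lambda>t. \<Sum>r\<in>R. a r * exp (u r + A r l * t) - X r * (u r + A r l * t))"
    unfolding h_def exp_potential_def shift ..
  have "(h has_real_derivative (\<Sum>r\<in>R. a r * (exp (u r + A r l * 0) * A r l) - X r * A r l)) (at 0)"
    unfolding h_eq by (intro derivative_eq_intros DERIV_sum) (auto simp: algebra_simps)
  moreover have "\<forall>t. \<bar>0 - t\<bar> < 1 \<longrightarrow> h 0 \<le> h t"
    using min by (simp add: h_def)
  ultimately have "(\<Sum>r\<in>R. a r * (exp (u r + A r l * 0) * A r l) - X r * A r l) = 0"
    by (rule DERIV_local_min[OF _ zero_less_one])
  then show ?thesis
    by (simp add: u_def sum_subtractf algebra_simps)
qed

lemma exp_equation_drop_dependent_column:
  fixes A :: "'r \<Rightarrow> nat \<Rightarrow> real"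
  assumes fC: "finite C" and k: "k \<in> C"
    and dep: "\<forall>r\<in>R. A r k = (\<Sum>j\<in>C - {k}. \<beta> j * A r j)"
    and sol: "\<forall>l\<in>C - {k}.
      (\<Sum>r\<in>R. A r l * (a r * exp (\<Sum>j\<in>C - {k}. A r j * x j))) = (\<Sum>r\<in>R. A r l * X r)"
  shows "\<exists>x. \<forall>l\<in>C. (\<Sum>r\<in>R. A r l * (a r * exp (\<Sum>j\<in>C. A r j * x j))) = (\<Sum>r\<in>R. A r l * X r)"
proof (intro exI[of _ "x(k := 0)"] ballI)
  fix l assume l: "l \<in> C"
  have same: "(\<Sum>j\<in>C. A r j * (x(k := 0)) j) = (\<Sum>j\<in>C - {k}. A r j * x j)" for r
    using fC k by (simp add: sum.remove)
  have dep_sum: "(\<Sum>r\<in>R. A r k * W r) = (\<Sum>j\<in>C - {k}. \<beta> j * (\<Sum>r\<in>R. A r j * W r))" for W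
  proof -
    have "(\<Sum>r\<in>R. A r k * W r) = (\<Sum>r\<in>R. \<Sum>j\<in>C - {k}. \<beta> j * (A r j * W r))"
      using dep by (intro sum.cong) (auto simp: sum_distrib_right mult.assoc)
    also have "\<dots> = (\<Sum>j\<in>C - {k}. \<beta> j * (\<Sum>r\<in>R. A r j * W r))"
      by (subst sum.swap) (simp add: sum_distrib_left)
    finally show ?thesis .
  qed
  show "(\<Sum>r\<in>R. A r l * (a r * exp (\<Sum>j\<in>C. A r j * (x(k := 0)) j))) = (\<Sum>r\<in>R. A r l * X r)"
  proof (cases "l = k")
    case True
    have "(\<Sum>r\<in>R. A r k * (a r * exp (\<Sum>j\<in>C - {k}. A r j * x j)))
        = (\<Sum>j\<in>C - {k}. \<beta> j * (\<Sum>r\<in>R. A r j * (a r * exp (\<Sum>j\<in>C - {k}. A r j * x j))))"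
      by (rule dep_sum)
    also have "\<dots> = (\<Sum>j\<in>C - {k}. \<beta> j * (\<Sum>r\<in>R. A r j * X r))"
      using sol by simp
    also have "\<dots> = (\<Sum>r\<in>R. A r k * X r)"
      by (rule dep_sum[symmetric])
    finally show ?thesis
      using True by (simp only: same)
  next
    case False
    then show ?thesis
      using l sol by (simp only: same) simp
  qed
qed

lemma exp_equation_solvable:
  fixes A :: "'r \<Rightarrow> nat \<Rightarrow> real"
  assumes fR: "finite R" and fC: "finite C" and a: "\<forall>r\<in>R. a r > 0" and X: "\<forall>r\<in>R. X r > 0"
  shows "\<exists>x. \<forall>l\<in>C. (\<Sum>r\<in>R. A r l * (a r * exp (\<Sum>j\<in>C. A r j * x j))) = (\<Sum>r\<in>R. A r l * X r)"
  using fC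
proof (induction "card C" arbitrary: C rule: less_induct)
  case less
  show ?case
  proof (cases "\<forall>y. (\<forall>r\<in>R. (\<Sum>j\<in>C. A r j * y j) = 0) \<longrightarrow> (\<forall>j\<in>C. y j = 0)")
    case True
    then obtain x where min: "\<forall>y. exp_potential R C A a X x \<le> exp_potential R C A a X y"
      using exp_potential_attains_min[OF fR less.prems True a X] by blast
    show ?thesis
      using exp_potential_min_gradient[OF fR less.prems _ min] by blast
  next
    case False
    then obtain y k where y: "\<forall>r\<in>R. (\<Sum>j\<in>C. A r j * y j) = 0" and k: "k \<in> C" "y k \<noteq> 0"
      by auto
    have "card (C - {k}) < card C"
      using less.prems k(1) by (rule card_Diff1_less)
    from less.hyps[OF this finite_Diff[OF less.prems]] obtain x where sol: "\<forall>l\<in>C - {k}.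
        (\<Sum>r\<in>R. A r l * (a r * exp (\<Sum>j\<in>C - {k}. A r j * x j))) = (\<Sum>r\<in>R. A r l * X r)"
      by blast
    have dep: "\<forall>r\<in>R. A r k = (\<Sum>j\<in>C - {k}. (- y j / y k) * A r j)"
    proof
      fix r assume r: "r \<in> R"
      have "A r k * y k + (\<Sum>j\<in>C - {k}. A r j * y j) = 0"
        using y r k less.prems by (simp add: sum.remove)
      then have "A r k = - (\<Sum>j\<in>C - {k}. A r j * y j) / y k"
        using k(2) by (simp add: field_simps)
      then show "A r k = (\<Sum>j\<in>C - {k}. (- y j / y k) * A r j)"
        by (simp add: sum_divide_distrib sum_negf[symmetric] mult_ac)
    qed
    show ?thesis
      by (rule exp_equation_drop_dependent_column[OF less.prems k(1) dep sol])
  qed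
qed

lemma exists_rootT_app_exp_solution:
  assumes "\<forall>r\<in>Delta n c. a r > 0" and "\<forall>r\<in>Delta n c. X r > 0"
  shows "\<exists>x. \<forall>l<n. rootT_app n c (\<lambda>r. a r * exp (root_app n x r)) l = rootT_app n c X l"
proof -
  obtain x where x: "\<forall>l\<in>{..<n}. (\<Sum>r\<in>Delta n c. of_int (root_entry r l)
      * (a r * exp (\<Sum>j\<in>{..<n}. of_int (root_entry r j) * x j))) = rootT_app n c X l"
    using exp_equation_solvable[where A = "\<lambda>r l. of_int (root_entry r l)",
        OF finite_Delta finite_lessThan[of n] assms]
    unfolding rootT_app_def by blast
  have "rootT_app n c (\<lambda>r. a r * exp (root_app n x r)) l = rootT_app n c X l" if "l < n" for l
    using x that unfolding rootT_app_def root_app_def by simp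
  then show ?thesis
    by blast
qed

section \<open>Signatures\<close>

lemma Delta_signature_parity:
  assumes \<delta>: "\<forall>i<n. \<delta> i \<in> {0, 1}" and kills: "root2_kills n c \<delta>" and r: "(i, j, k) \<in> Delta n c"
  shows "\<delta> k = 0 \<longleftrightarrow> (\<delta> i = 0 \<longleftrightarrow> \<delta> j = 0)"
proof -
  have ijk: "i < n" "j < n" "k < n"
    using r by auto
  have "(\<Sum>l<n. root_entry (i, j, k) l * \<delta> l) mod 2 = 0"
    using kills r unfolding root2_kills_def by blast
  then have "(\<delta> k - \<delta> i - \<delta> j) mod 2 = 0"
    using sum_root_entry_triple[OF ijk, of \<delta>] by simp
  moreover have "\<delta> i \<in> {0, 1}" "\<delta> j \<in> {0, 1}" "\<delta> k \<in> {0, 1}"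
    using \<delta> ijk by auto
  ultimately show ?thesis
    by auto
qed

lemma metric_weight_pos:
  assumes g: "\<forall>i<n. g i \<noteq> 0" and sig: "has_signature n g \<delta>" and \<delta>: "\<forall>i<n. \<delta> i \<in> {0, 1}"
    and kills: "root2_kills n c \<delta>" and r: "r \<in> Delta n c"
  shows "metric_weight c g r > 0"
proof -
  obtain i j k where r_eq: "r = (i, j, k)"
    by (cases r)
  have ijk: "i < n" "j < n" "k < n" "c i j k \<noteq> 0"
    using r by (auto simp: r_eq)
  have sign: "(g t > 0 \<longleftrightarrow> \<delta> t = 0) \<and> (g t > 0 \<or> g t < 0)" if "t < n" for t
  proof -
    have "g t > 0 \<or> g t < 0"
      using g[rule_format, OF that] by (auto simp: linorder_neq_iff)
    then show ?thesis
      using sig that unfolding has_signature_def by auto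
  qed
  have "g k > 0 \<longleftrightarrow> (g i > 0 \<longleftrightarrow> g j > 0)"
    using Delta_signature_parity[OF \<delta> kills r[unfolded r_eq]] sign ijk by simp
  then have "g k / (g i * g j) > 0"
    using sign[OF ijk(1)] sign[OF ijk(2)] sign[OF ijk(3)]
    by (auto simp: zero_less_divide_iff zero_less_mult_iff mult_less_0_iff)
  moreover have "(c i j k)\<^sup>2 > 0"
    using ijk(4) by simp
  ultimately have "(c i j k)\<^sup>2 * (g k / (g i * g j)) > 0"
    by (rule mult_pos_pos[rotated])
  then show ?thesis
    by (simp add: r_eq metric_weight_def)
qed

lemma metric_weight_signed_exp:
  assumes \<delta>: "\<forall>i<n. \<delta> i \<in> {0, 1}" and kills: "root2_kills n c \<delta>" and r: "r \<in> Delta n c"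
  shows "metric_weight c (\<lambda>i. (if \<delta> i = 0 then 1 else -1) * exp (x i)) r
    = (case r of (i, j, k) \<Rightarrow> (c i j k)\<^sup>2) * exp (root_app n x r)"
proof -
  obtain i j k where r_eq: "r = (i, j, k)"
    by (cases r)
  have ijk: "i < n" "j < n" "k < n"
    using r by (auto simp: r_eq)
  define s where "s t = (if \<delta> t = 0 then 1 else -1 :: real)" for t
  have sk: "s k = s i * s j" and "s k \<noteq> 0"
    using Delta_signature_parity[OF \<delta> kills r[unfolded r_eq]] by (auto simp: s_def)
  then have "s k * exp (x k) / (s i * exp (x i) * (s j * exp (x j))) = exp (x k) / (exp (x i) * exp (x j))"
    by (simp add: mult_ac)
  also have "\<dots> = exp (x k - x i - x j)"
    by (simp add: exp_diff)
  finally have ratio: "s k * exp (x k) / (s i * exp (x i) * (s j * exp (x j))) = exp (x k - x i - x j)" .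
  show ?thesis
    unfolding r_eq metric_weight_def s_def[symmetric] root_app_triple[OF ijk]
    by (simp add: ratio[symmetric])
qed

lemma has_signature_signed_exp:
  "\<forall>i<n. \<delta> i \<in> {0, 1} \<Longrightarrow> has_signature n (\<lambda>i. (if \<delta> i = 0 then 1 else -1) * exp (x i)) \<delta>"
  unfolding has_signature_def by (auto simp: zero_less_mult_iff mult_less_0_iff)


lemma nilsoliton_imp_positive_kernel_vector:
  assumes nn: "nice_nilpotent n c" and b: "\<forall>r\<in>Delta n c. root_app n (rootT_app n c b) r = 1"
    and \<delta>: "\<forall>i<n. \<delta> i \<in> {0, 1}" and kills: "root2_kills n c \<delta>"
    and g: "diag_metric n g" and sig: "has_signature n g \<delta>" and "nilsoliton n c g"
  shows "\<exists>lam X. (\<forall>r\<in>Delta n c. X r > 0) \<and> (\<forall>l<n. rootT_app n c (\<lambda>r. X r + 2 * lam * b r) l = 0)"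
proof -
  have g_nonzero: "\<forall>i<n. g i \<noteq> 0"
    using g by (simp add: diag_metric_def)
  obtain lam where "\<forall>l<n. rootT_app n c (\<lambda>r. metric_weight c g r + 2 * lam * b r) l = 0"
    using nilsoliton_iff_rootT_kernel[OF nn g_nonzero b] \<open>nilsoliton n c g\<close> by blast
  moreover have "\<forall>r\<in>Delta n c. metric_weight c g r > 0"
    using metric_weight_pos[OF g_nonzero sig \<delta> kills] by blast
  ultimately show ?thesis
    by blast
qed

lemma positive_kernel_vector_imp_nilsoliton:
  assumes nn: "nice_nilpotent n c" and b: "\<forall>r\<in>Delta n c. root_app n (rootT_app n c b) r = 1"
    and \<delta>: "\<forall>i<n. \<delta> i \<in> {0, 1}" and kills: "root2_kills n c \<delta>"
    and X: "\<forall>r\<in>Delta n c. X r > 0" and kernel: "\<forall>l<n. rootT_app n c (\<lambda>r. X r + 2 * lam * b r) l = 0"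
  shows "\<exists>g. diag_metric n g \<and> has_signature n g \<delta> \<and> nilsoliton n c g"
proof -
  have "\<forall>r\<in>Delta n c. (case r of (i, j, k) \<Rightarrow> (c i j k)\<^sup>2) > 0"
    by auto
  then obtain x where x: "\<forall>l<n.
      rootT_app n c (\<lambda>r. (case r of (i, j, k) \<Rightarrow> (c i j k)\<^sup>2) * exp (root_app n x r)) l = rootT_app n c X l"
    using exists_rootT_app_exp_solution X by blast
  define g :: vec where "g = (\<lambda>i. (if \<delta> i = 0 then 1 else -1) * exp (x i))"
  have "rootT_app n c (metric_weight c g) l
      = rootT_app n c (\<lambda>r. (case r of (i, j, k) \<Rightarrow> (c i j k)\<^sup>2) * exp (root_app n x r)) l" for l
    unfolding g_def using metric_weight_signed_exp[OF \<delta> kills] by (rule rootT_app_cong)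
  with x have "rootT_app n c (metric_weight c g) l = rootT_app n c X l" if "l < n" for l
    using that by simp
  then have "\<forall>l<n. rootT_app n c (\<lambda>r. metric_weight c g r + 2 * lam * b r) l = 0"
    using kernel by (simp add: rootT_app_add_scaled)
  moreover have g_nonzero: "\<forall>i<n. g i \<noteq> 0"
    by (simp add: g_def)
  ultimately have "nilsoliton n c g"
    using nilsoliton_iff_rootT_kernel[OF nn g_nonzero b] by blast
  moreover have "diag_metric n g"
    using g_nonzero by (simp add: diag_metric_def)
  moreover have "has_signature n g \<delta>"
    unfolding g_def by (rule has_signature_signed_exp[OF \<delta>])
  ultimately show ?thesis
    by blast
qed

theorem corollary1p17:
  fixes n :: nat and c :: sconst
    and b :: "nat \<times> nat \<times> nat \<Rightarrow> real" and \<delta> :: "nat \<Rightarrow> int"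
  assumes "nice_nilpotent n c"
    and "\<forall>r\<in>Delta n c. root_app n (rootT_app n c b) r = 1"
    and "\<forall>i<n. \<delta> i \<in> {0, 1}"
    and "root2_kills n c \<delta>"
  shows "(\<exists>g. diag_metric n g \<and> has_signature n g \<delta> \<and> nilsoliton n c g) \<longleftrightarrow>
         (\<exists>(lam::real) (X :: nat \<times> nat \<times> nat \<Rightarrow> real).
            (\<forall>r\<in>Delta n c. X r > 0) \<and>
            (\<forall>l<n. rootT_app n c (\<lambda>r. X r + 2 * lam * b r) l = 0))"
  using nilsoliton_imp_positive_kernel_vector[OF assms] positive_kernel_vector_imp_nilsoliton[OF assms]
  by blast

end
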